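(* Let $n$ be a non-negative integer and let $r,s\in\mathbb{C}\setminus\mathbb{Z}$ with $s\neq0$ and $r-s\notin\mathbb{Z}$. Then \[ \begin{aligned} \sum_{k=0}^{n}(-1)^{k}\binom{n}{k}\frac{H_s-H_{k+r-s}}{\binom{k+r}{s}}H_k &=H_n\left(\frac{r+1}{(r-s+1)^2}\frac{1}{\binom{n+r}{r-s+1}}+\frac{s}{r-s+1}\frac{H_{n+s-1}-H_{r-s+1}}{\binom{n+r}{r-s+1}}\right)+H_n\frac{H_{r-s}-H_s}{\binom{r}{s}}\\ &\quad+\sum_{k=0}^{n-1}H_{n-1-k}\frac{s(k+s)(H_{k+s}-H_{r-s+1})+k}{(k+s)^2\binom{r+k+1}{r-s+1}}. \end{aligned} \]
   Context: For complex $z$ not a negative integer, $H_z=\psi(z+1)+\gamma$ ($\psi$ the digamma function, $\gamma$ Euler's constant); for integers $n\ge 0$, $H_n=\sum_{j=1}^n 1/j$. Binomial coefficients with complex entries: $\binom{x}{y}=\frac{\Gamma(x+1)}{\Gamma(y+1)\Gamma(x-y+1)}$. *)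

theory Defs
  imports "HOL-Analysis.Analysis"
begin

text \<open>Harmonic number of a complex argument: H_z = psi(z+1) + gamma.\<close>
definition HC :: "complex \<Rightarrow> complex" where
  "HC z = Digamma (z + 1) + euler_mascheroni"

definition cbinom :: "complex \<Rightarrow> complex \<Rightarrow> complex" where
  "cbinom x y = Gamma (x + 1) / (Gamma (y + 1) * Gamma (x - y + 1))"

end

theory Submission
  imports Defs
begin

(*
  Let a_k = (H_s - H_(k+r-s)) / binom(k+r, s) and let b_n = sum_k (-1)^k binom(n,k) a_k be its
  binomial transform. Pascal's rule gives b_(n+1) = b_n - b'_n, where b' is the transform of the
  shifted sequence a_(k+1); shifting k is the same as replacing r by r + 1. With the functional
  equations of Gamma and Digamma this recursion yields, by induction on n, the closed form
    b_n = ((r+1)/(r-s+1)^2 + s/(r-s+1) (H_(n+s-1) - H_(r-s+1))) / binom(n+r, r-s+1).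
  On the other hand, for every sequence a, summation by parts against H_k gives
    sum_k (-1)^k binom(n,k) H_k a_k = H_n (b_n - a_0) + sum_(k<n) H_(n-1-k) b'_k,
  and inserting the closed forms of b_n and of b'_k (the closed form at r + 1) gives the identity.
*)

definition binomial_transform :: "(nat \<Rightarrow> 'a :: comm_ring_1) \<Rightarrow> nat \<Rightarrow> 'a" where
  "binomial_transform a n = (\<Sum>k\<le>n. (-1)^k * of_nat (n choose k) * a k)"

lemma binomial_transform_0 [simp]: "binomial_transform a 0 = a 0"
  by (simp add: binomial_transform_def)

lemma binomial_transform_Suc_shift:
  "binomial_transform a (Suc n) = a 0 - (\<Sum>k\<le>n. (-1)^k * of_nat (Suc n choose Suc k) * a (Suc k))"
  unfolding binomial_transform_def by (subst sum.atMost_Suc_shift) (simp add: sum_negf)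

lemma binomial_transform_Suc:
  "binomial_transform a (Suc n) = binomial_transform a n - binomial_transform (\<lambda>k. a (Suc k)) n"
proof -
  have lower: "binomial_transform a n = a 0 - (\<Sum>k\<le>n. (-1)^k * of_nat (n choose Suc k) * a (Suc k))"
  proof (cases n)
    case (Suc m)
    have "(\<Sum>k\<le>m. (-1)^k * of_nat (n choose Suc k) * a (Suc k))
        = (\<Sum>k\<le>n. (-1)^k * of_nat (n choose Suc k) * a (Suc k))"
      using Suc by (simp add: binomial_eq_0)
    then show ?thesis
      using binomial_transform_Suc_shift[of a m] Suc by simp
  qed simp
  have pascal: "(\<Sum>k\<le>n. (-1)^k * of_nat (Suc n choose Suc k) * a (Suc k))
      = binomial_transform (\<lambda>k. a (Suc k)) n
        + (\<Sum>k\<le>n. (-1)^k * of_nat (n choose Suc k) * a (Suc k))"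
    by (simp add: binomial_transform_def algebra_simps flip: sum.distrib)
  show ?thesis
    unfolding binomial_transform_Suc_shift[of a n] pascal lower by simp
qed

lemma sum_binomial_divide_Suc:
  fixes a :: "nat \<Rightarrow> 'a :: field_char_0"
  shows "(\<Sum>k\<le>n. (-1)^k * of_nat (n choose k) * a (Suc k) / of_nat (Suc k))
       = (a 0 - binomial_transform a (Suc n)) / of_nat (Suc n)"
proof -
  have "(-1)^k * of_nat (n choose k) * a (Suc k) / of_nat (Suc k)
      = (-1)^k * of_nat (Suc n choose Suc k) * a (Suc k) / (of_nat (Suc n) :: 'a)" for k
  proof -
    have "of_nat (Suc k) * of_nat (Suc n choose Suc k) = (of_nat (Suc n) * of_nat (n choose k) :: 'a)"
      by (simp only: Suc_times_binomial flip: of_nat_mult)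
    then show ?thesis
      by (simp add: field_simps del: of_nat_Suc binomial_Suc_Suc)
  qed
  then show ?thesis
    by (simp add: binomial_transform_Suc_shift sum_divide_distrib del: of_nat_Suc binomial_Suc_Suc)
qed

lemma binomial_transform_harm_mult:
  fixes a :: "nat \<Rightarrow> 'a :: real_normed_field"
  shows "binomial_transform (\<lambda>k. harm k * a k) n
       = harm n * (binomial_transform a n - a 0)
         + (\<Sum>k<n. harm (n - 1 - k) * binomial_transform (\<lambda>j. a (Suc j)) k)"
proof (induction n arbitrary: a)
  case 0
  show ?case by (simp add: harm_expand)
next
  case (Suc n)
  define a' where "a' = (\<lambda>j. a (Suc j))"
  have "binomial_transform (\<lambda>k. harm (Suc k) * a' k) n
      = binomial_transform (\<lambda>k. harm k * a' k) n
        + (\<Sum>k\<le>n. (-1)^k * of_nat (n choose k) * a (Suc k) / of_nat (Suc k))"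
    by (simp add: a'_def binomial_transform_def harm_Suc algebra_simps divide_inverse
        flip: sum.distrib)
  also note sum_binomial_divide_Suc
  finally have harm_shift: "binomial_transform (\<lambda>k. harm (Suc k) * a' k) n
      = binomial_transform (\<lambda>k. harm k * a' k) n
        + (a 0 - binomial_transform a (Suc n)) / of_nat (Suc n)" .
  have sum_shift: "(\<Sum>k<Suc n. harm (Suc n - 1 - k) * binomial_transform a' k)
      = harm n * a' 0 + (\<Sum>k<n. harm (n - 1 - k) * binomial_transform a' (Suc k))"
    by (subst sum.lessThan_Suc_shift) simp
  have pascal: "binomial_transform (\<lambda>j. a' (Suc j)) k
      = binomial_transform a' k - binomial_transform a' (Suc k)" for k
    by (simp add: binomial_transform_Suc)
  have step: "binomial_transform a (Suc n) = binomial_transform a n - binomial_transform a' n"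
    by (simp add: a'_def binomial_transform_Suc)
  have "binomial_transform (\<lambda>k. harm k * a k) (Suc n)
      = binomial_transform (\<lambda>k. harm k * a k) n
        - binomial_transform (\<lambda>k. harm (Suc k) * a' k) n"
    by (simp add: a'_def binomial_transform_Suc)
  also have "\<dots> = harm (Suc n) * (binomial_transform a (Suc n) - a 0)
      + (\<Sum>k<Suc n. harm (Suc n - 1 - k) * binomial_transform a' k)"
    unfolding harm_shift sum_shift Suc.IH[of a] Suc.IH[of a']
    unfolding a'_def[symmetric] pascal step
    by (simp add: harm_Suc algebra_simps sum_subtractf divide_inverse del: of_nat_Suc)
  finally show ?case
    by (simp add: a'_def)
qed

lemma nonzero_if_diff_Ints:
  fixes x y :: "'a :: ring_1"
  assumes "x \<notin> \<int>" and "y - x \<in> \<int>"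
  shows "y \<noteq> 0"
  using assms by (metis Ints_minus diff_0 minus_minus)

lemma plus1_not_Ints: "(x :: 'a :: ring_1) \<notin> \<int> \<Longrightarrow> x + 1 \<notin> \<int>"
  by (metis Ints_1 Ints_diff add_diff_cancel_right')

(* Gamma vanishes at its poles, so the functional equation holds everywhere except at 0. *)
lemma Gamma_plus1_nonzero:
  fixes z :: "'a :: Gamma"
  assumes "z \<noteq> 0"
  shows "Gamma (z + 1) = z * Gamma z"
proof -
  have "z * Gamma z = z * inverse (z * rGamma (z + 1))"
    by (simp add: Gamma_def rGamma_plus1)
  also have "\<dots> = Gamma (z + 1)"
    using assms by (simp add: Gamma_def)
  finally show ?thesis ..
qed

lemma HC_plus1: "z + 1 \<noteq> 0 \<Longrightarrow> HC (z + 1) = HC z + 1 / (z + 1)"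
  using Digamma_plus1[of "z + 1"] by (simp add: HC_def)

lemma cbinom_plus1_left:
  assumes "x + 1 \<noteq> 0" and "x - y + 1 \<noteq> 0"
  shows "cbinom (x + 1) y = (x + 1) / (x - y + 1) * cbinom x y"
proof -
  have shift: "x + 1 - y + 1 = (x - y + 1) + 1" by simp
  show ?thesis
    unfolding cbinom_def shift Gamma_plus1_nonzero[OF assms(1)] Gamma_plus1_nonzero[OF assms(2)]
    by (simp add: divide_inverse mult_ac)
qed

lemma cbinom_plus1_right:
  assumes "y + 1 \<noteq> 0" and "x - y \<noteq> 0"
  shows "cbinom x (y + 1) = (x - y) / (y + 1) * cbinom x y"
proof -
  have shift: "x - (y + 1) + 1 = x - y" by simp
  show ?thesis
    using assms(2)
    unfolding cbinom_def shift Gamma_plus1_nonzero[OF assms(1)] Gamma_plus1_nonzero[OF assms(2)]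
    by (simp add: divide_inverse mult_ac)
qed

lemma cbinom_symmetric: "cbinom x (x - y) = cbinom x y"
  by (simp add: cbinom_def mult.commute)

definition harmonic_binomial_term :: "complex \<Rightarrow> complex \<Rightarrow> nat \<Rightarrow> complex" where
  "harmonic_binomial_term r s k = (HC s - HC (of_nat k + r - s)) / cbinom (of_nat k + r) s"

definition harmonic_binomial_closed_form :: "complex \<Rightarrow> complex \<Rightarrow> nat \<Rightarrow> complex" where
  "harmonic_binomial_closed_form r s n =
     ((r + 1) / (r - s + 1)^2 + s / (r - s + 1) * (HC (of_nat n + s - 1) - HC (r - s + 1)))
     / cbinom (of_nat n + r) (r - s + 1)"

lemma harmonic_binomial_term_Suc:
  "harmonic_binomial_term r s (Suc k) = harmonic_binomial_term (r + 1) s k"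
  by (simp add: harmonic_binomial_term_def algebra_simps)

lemma harmonic_binomial_closed_form_0:
  assumes "s \<noteq> 0" and "r - s \<notin> \<int>"
  shows "harmonic_binomial_closed_form r s 0 = harmonic_binomial_term r s 0"
proof -
  define u where "u = r - s + 1"
  have "u \<noteq> 0"
    unfolding u_def using assms(2) by (rule nonzero_if_diff_Ints) simp
  have HC_s: "HC (s - 1) = HC s - 1 / s"
    using HC_plus1[of "s - 1"] assms(1) by simp
  have HC_u: "HC u = HC (r - s) + 1 / u"
    using HC_plus1[of "r - s"] \<open>u \<noteq> 0\<close> by (simp add: u_def)
  have binom: "cbinom r u = s / u * cbinom r s"
    using cbinom_plus1_right[of "r - s" r] \<open>u \<noteq> 0\<close> assms(1)
    by (simp add: u_def cbinom_symmetric)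
  have "r + 1 = u + s" by (simp add: u_def)
  then have "(r + 1) / u^2 + s / u * (HC (s - 1) - HC u) = s / u * (HC s - HC (r - s))"
    unfolding HC_s HC_u using \<open>u \<noteq> 0\<close> assms(1)
    by (simp add: field_simps power2_eq_square)
  then show ?thesis
    using \<open>u \<noteq> 0\<close> assms(1)
    by (simp add: harmonic_binomial_closed_form_def harmonic_binomial_term_def binom flip: u_def)
qed

lemma harmonic_binomial_closed_form_plus1:
  assumes s: "s \<notin> \<int>" and rs: "r - s \<notin> \<int>"
  shows "harmonic_binomial_closed_form (r + 1) s n
       = (1 + s * (HC (of_nat n + s - 1) - HC (r - s + 1)))
         / ((of_nat n + s) * cbinom (of_nat n + r + 1) (r - s + 1))"
proof -
  define u where "u = r - s + 1"
  define w where "w = u + 1"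
  define v where "v = of_nat n + s"
  define D where "D = cbinom (of_nat n + r + 1) u"
  define y where "y = HC (of_nat n + s - 1) - HC u"
  have "w \<noteq> 0"
    unfolding w_def u_def using rs by (rule nonzero_if_diff_Ints) simp
  have "v \<noteq> 0"
    unfolding v_def using s by (rule nonzero_if_diff_Ints) simp
  have binom: "cbinom (of_nat n + r + 1) w = v / w * D"
  proof -
    have "of_nat n + r + 1 - u = v" by (simp add: u_def v_def)
    then show ?thesis
      using cbinom_plus1_right[of u "of_nat n + r + 1"] \<open>w \<noteq> 0\<close> \<open>v \<noteq> 0\<close>
      by (simp add: D_def w_def)
  qed
  have HC_w: "HC w = HC u + 1 / w"
    using HC_plus1[of u] \<open>w \<noteq> 0\<close> by (simp add: w_def)
  have "harmonic_binomial_closed_form (r + 1) s n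
      = ((w + s) / w^2 + s / w * (y - 1 / w)) / (v / w * D)"
  proof -
    have "r + 1 - s + 1 = w" "r + 1 + 1 = w + s" "of_nat n + (r + 1) = of_nat n + r + 1"
      by (simp_all add: w_def u_def)
    then show ?thesis
      by (simp only: harmonic_binomial_closed_form_def binom HC_w y_def) (simp add: algebra_simps)
  qed
  also have "(w + s) / w^2 + s / w * (y - 1 / w) = (1 + s * y) / w"
    using \<open>w \<noteq> 0\<close> by (simp add: field_simps power2_eq_square)
  finally show ?thesis
    using \<open>w \<noteq> 0\<close> by (simp add: y_def v_def D_def divide_inverse flip: u_def)
qed

lemma harmonic_binomial_closed_form_Suc:
  assumes r: "r \<notin> \<int>" and s: "s \<notin> \<int>" and rs: "r - s \<notin> \<int>"
  shows "harmonic_binomial_closed_form r s (Suc n)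
       = harmonic_binomial_closed_form r s n - harmonic_binomial_closed_form (r + 1) s n"
proof -
  define u where "u = r - s + 1"
  define v where "v = of_nat n + s"
  define z where "z = of_nat n + r + 1"
  define x where "x = HC (of_nat n + s - 1) - HC u"
  define D where "D = cbinom (of_nat n + r + 1) u"
  define P0 where "P0 = (u + s) / u^2 + s / u * x"
  define P1 where "P1 = (u + s) / u^2 + s / u * (x + 1 / v)"
  have "u \<noteq> 0"
    unfolding u_def using rs by (rule nonzero_if_diff_Ints) simp
  have "v \<noteq> 0"
    unfolding v_def using s by (rule nonzero_if_diff_Ints) simp
  have "z \<noteq> 0"
    unfolding z_def using r by (rule nonzero_if_diff_Ints) simp
  have r1: "r + 1 = u + s"
    by (simp add: u_def)
  have binom: "D = z / v * cbinom (of_nat n + r) u"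
    using cbinom_plus1_left[of "of_nat n + r" u] \<open>z \<noteq> 0\<close> \<open>v \<noteq> 0\<close>
    by (simp add: D_def z_def v_def u_def add.assoc)
  have HC_v: "HC (of_nat n + s) = HC (of_nat n + s - 1) + 1 / v"
    using HC_plus1[of "of_nat n + s - 1"] \<open>v \<noteq> 0\<close> by (simp add: v_def)
  have "harmonic_binomial_closed_form r s (Suc n) = P1 / D"
  proof -
    have "of_nat (Suc n) + s - 1 = of_nat n + s" "of_nat (Suc n) + r = of_nat n + r + 1"
      by simp_all
    then show ?thesis
      by (simp only: harmonic_binomial_closed_form_def HC_v P1_def x_def D_def r1 flip: u_def)
        (simp add: algebra_simps)
  qed
  moreover have "harmonic_binomial_closed_form r s n = P0 / (v / z * D)"
    using \<open>z \<noteq> 0\<close> \<open>v \<noteq> 0\<close>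
    by (simp add: harmonic_binomial_closed_form_def binom P0_def x_def r1 flip: u_def)
  moreover have "harmonic_binomial_closed_form (r + 1) s n = (1 + s * x) / (v * D)"
    using harmonic_binomial_closed_form_plus1[OF s rs] by (simp add: x_def v_def D_def u_def)
  moreover have "P1 = (z * P0 - (1 + s * x)) / v"
  proof -
    have "z = v + u"
      by (simp add: z_def v_def u_def)
    with \<open>u \<noteq> 0\<close> \<open>v \<noteq> 0\<close> show ?thesis
      unfolding P0_def P1_def by (simp add: field_simps power2_eq_square)
  qed
  ultimately show ?thesis
    by (simp add: divide_inverse algebra_simps)
qed

lemma binomial_transform_harmonic_binomial_term:
  assumes "r \<notin> \<int>" and s: "s \<notin> \<int>" and "r - s \<notin> \<int>"
  shows "binomial_transform (harmonic_binomial_term r s) n = harmonic_binomial_closed_form r s n"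
  using assms(1,3)
proof (induction n arbitrary: r)
  case 0
  have "s \<noteq> 0" using s by auto
  with 0 show ?case
    by (simp add: harmonic_binomial_closed_form_0)
next
  case (Suc n)
  have "r + 1 \<notin> \<int>" "r + 1 - s \<notin> \<int>"
    using Suc.prems plus1_not_Ints[of r] plus1_not_Ints[of "r - s"] by (simp_all add: algebra_simps)
  then have "binomial_transform (harmonic_binomial_term (r + 1) s) n
      = harmonic_binomial_closed_form (r + 1) s n"
    by (rule Suc.IH)
  then show ?case
    using Suc.IH[OF Suc.prems] Suc.prems s
    by (simp add: binomial_transform_Suc harmonic_binomial_term_Suc harmonic_binomial_closed_form_Suc)
qed

lemma harmonic_binomial_closed_form_plus1_altdef:
  assumes s: "s \<notin> \<int>" and rs: "r - s \<notin> \<int>"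
  shows "harmonic_binomial_closed_form (r + 1) s k
       = (s * (of_nat k + s) * (HC (of_nat k + s) - HC (r - s + 1)) + of_nat k)
         / ((of_nat k + s)^2 * cbinom (r + of_nat k + 1) (r - s + 1))"
proof -
  define v where "v = of_nat k + s"
  define c where "c = HC (r - s + 1)"
  define D where "D = cbinom (of_nat k + r + 1) (r - s + 1)"
  have "v \<noteq> 0"
    unfolding v_def using s by (rule nonzero_if_diff_Ints) simp
  have HC_v: "HC v = HC (v - 1) + 1 / v"
    using HC_plus1[of "v - 1"] \<open>v \<noteq> 0\<close> by simp
  have "harmonic_binomial_closed_form (r + 1) s k = (1 + s * (HC (v - 1) - c)) / (v * D)"
    using harmonic_binomial_closed_form_plus1[OF s rs, of k] by (simp add: v_def c_def D_def)
  also have "\<dots> = v * (1 + s * (HC (v - 1) - c)) / (v^2 * D)"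
    using \<open>v \<noteq> 0\<close> by (simp add: power2_eq_square)
  also have "v * (1 + s * (HC (v - 1) - c)) = s * v * (HC v - c) + (v - s)"
    using \<open>v \<noteq> 0\<close> unfolding HC_v by (simp add: field_simps)
  finally show ?thesis
    by (simp add: v_def c_def D_def add_ac)
qed

theorem theorem15:
  fixes n :: nat and r s :: complex
  assumes "r \<notin> \<int>" and "s \<notin> \<int>" and "s \<noteq> 0" and "r - s \<notin> \<int>"
  shows "(\<Sum>k=0..n. (-1)^k * of_nat (n choose k)
            * (HC s - HC (of_nat k + r - s)) / cbinom (of_nat k + r) s * harm k)
    = harm n * ((r + 1) / (r - s + 1)^2 * (1 / cbinom (of_nat n + r) (r - s + 1))
                + s / (r - s + 1) * (HC (of_nat n + s - 1) - HC (r - s + 1))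
                    / cbinom (of_nat n + r) (r - s + 1))
      + harm n * (HC (r - s) - HC s) / cbinom r s
      + (\<Sum>k=0..<n. harm (n - 1 - k)
            * (s * (of_nat k + s) * (HC (of_nat k + s) - HC (r - s + 1)) + of_nat k)
            / ((of_nat k + s)^2 * cbinom (r + of_nat k + 1) (r - s + 1)))"
proof -
  have "r + 1 \<notin> \<int>" "r + 1 - s \<notin> \<int>"
    using assms(1,4) plus1_not_Ints[of r] plus1_not_Ints[of "r - s"] by (simp_all add: algebra_simps)
  then have shifted: "binomial_transform (\<lambda>j. harmonic_binomial_term r s (Suc j))
      = harmonic_binomial_closed_form (r + 1) s"
    using assms(2)
    by (simp add: harmonic_binomial_term_Suc binomial_transform_harmonic_binomial_term fun_eq_iff)
  have regroup: "h * (x - (p - q) / c) + y = h * x + h * (q - p) / c + y" for h x p q c y :: complex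
    by (simp add: divide_inverse algebra_simps)
  have "(\<Sum>k=0..n. (-1)^k * of_nat (n choose k)
            * (HC s - HC (of_nat k + r - s)) / cbinom (of_nat k + r) s * harm k)
      = binomial_transform (\<lambda>k. harm k * harmonic_binomial_term r s k) n"
    by (simp add: binomial_transform_def harmonic_binomial_term_def atLeast0AtMost mult_ac)
  also have "\<dots> = harm n * (harmonic_binomial_closed_form r s n - harmonic_binomial_term r s 0)
      + (\<Sum>k<n. harm (n - 1 - k) * harmonic_binomial_closed_form (r + 1) s k)"
    by (simp only: binomial_transform_harm_mult shifted
        binomial_transform_harmonic_binomial_term[OF assms(1,2,4)])
  also have "harmonic_binomial_term r s 0 = (HC s - HC (r - s)) / cbinom r s"
    by (simp add: harmonic_binomial_term_def)
  also have "harmonic_binomial_closed_form r s n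
      = (r + 1) / (r - s + 1)^2 * (1 / cbinom (of_nat n + r) (r - s + 1))
        + s / (r - s + 1) * (HC (of_nat n + s - 1) - HC (r - s + 1))
          / cbinom (of_nat n + r) (r - s + 1)"
    by (simp add: harmonic_binomial_closed_form_def add_divide_distrib)
  also have "(\<Sum>k<n. harm (n - 1 - k) * harmonic_binomial_closed_form (r + 1) s k)
      = (\<Sum>k=0..<n. harm (n - 1 - k)
            * (s * (of_nat k + s) * (HC (of_nat k + s) - HC (r - s + 1)) + of_nat k)
            / ((of_nat k + s)^2 * cbinom (r + of_nat k + 1) (r - s + 1)))"
    using assms(2,4) by (simp add: harmonic_binomial_closed_form_plus1_altdef atLeast0LessThan)
  finally show ?thesis
    by (simp only: regroup)
qed

end
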